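(* $\mathrm{REG}\nsubseteq\mathrm{1QFA}/n$, and thus $\mathrm{1QFA}/n\neq\mathrm{REG}/n$.
   Context: $\mathrm{REG}$ is the family of regular languages. A 1qfa is a one-way measure-many quantum finite automaton. For equal-length strings $x,y$, $\genfrac{[}{]}{0pt}{}{x}{y}$ is the two-track string with $x$ on the upper track and $y$ on the lower track. $\mathrm{REG}/n$ is the family of languages $L$ for which there exist a one-way deterministic finite automaton $M$, an advice alphabet $\Gamma$ and an advice function $h:\mathbb{N}\to\Gamma^*$ with $|h(n)|=n$ such that for all $x$, $x\in L$ iff $M$ accepts $\genfrac{[}{]}{0pt}{}{x}{h(|x|)}$. $\mathrm{1QFA}/n$ is defined in the same way with a 1qfa that outputs $L(x)$ with probability at least $1-\varepsilon$ for some constant $\varepsilon\in[0,1/2)$. (The separating language used is $(aa+ab+ba)^*$ over $\{a,b\}$.) It is known that $\mathrm{1QFA}/n\subseteq\mathrm{REG}/n$. *)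

theory Defs
  imports Complex_Main
begin

datatype ab = SymA | SymB

definition dfa_ok :: "nat \<Rightarrow> (nat \<Rightarrow> 'a \<Rightarrow> nat) \<Rightarrow> nat \<Rightarrow> bool" where
  "dfa_ok k delta q0 \<longleftrightarrow> q0 < k \<and> (\<forall>q<k. \<forall>s. delta q s < k)"

definition REG :: "'a list set set" where
  "REG = {L. \<exists>k delta q0 F. dfa_ok k delta q0 \<and> L = {x. foldl delta q0 x \<in> F}}"

definition advice_ok :: "nat \<Rightarrow> (nat \<Rightarrow> nat list) \<Rightarrow> bool" where
  "advice_ok g h \<longleftrightarrow> (\<forall>n. length (h n) = n \<and> set (h n) \<subseteq> {..<g})"

text \<open>Two-track string: x on the upper track, advice on the lower track.\<close>

definition track :: "'a list \<Rightarrow> nat list \<Rightarrow> ('a \<times> nat) list" where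
  "track x y = zip x y"

definition REG_n :: "'a list set set" where
  "REG_n = {L. \<exists>g h k (delta :: nat \<Rightarrow> ('a \<times> nat) \<Rightarrow> nat) q0 F.
      advice_ok g h \<and> dfa_ok k delta q0 \<and>
      (\<forall>x. x \<in> L \<longleftrightarrow> foldl delta q0 (track x (h (length x))) \<in> F)}"

datatype 'a tape = LEnd | Sym 'a | REnd

definition tape_of :: "'a list \<Rightarrow> 'a tape list" where
  "tape_of w = LEnd # map Sym w @ [REnd]"

text \<open>Vectors in C^k are functions nat => complex (entries outside {..<k} ignored);
k x k matrices are functions nat => nat => complex.\<close>

definition mv :: "nat \<Rightarrow> (nat \<Rightarrow> nat \<Rightarrow> complex) \<Rightarrow> (nat \<Rightarrow> complex) \<Rightarrow> (nat \<Rightarrow> complex)" where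
  "mv k U v = (\<lambda>i. if i < k then (\<Sum>j<k. U i j * v j) else 0)"

definition unitary_k :: "nat \<Rightarrow> (nat \<Rightarrow> nat \<Rightarrow> complex) \<Rightarrow> bool" where
  "unitary_k k U \<longleftrightarrow>
     (\<forall>i<k. \<forall>j<k. (\<Sum>l<k. cnj (U l i) * U l j) = (if i = j then 1 else 0))"

definition proj :: "nat set \<Rightarrow> (nat \<Rightarrow> complex) \<Rightarrow> (nat \<Rightarrow> complex)" where
  "proj S v = (\<lambda>i. if i \<in> S then v i else 0)"

definition nsq :: "nat \<Rightarrow> (nat \<Rightarrow> complex) \<Rightarrow> real" where
  "nsq k v = (\<Sum>i<k. (cmod (v i))\<^sup>2)"

text \<open>haltp k U N H w psi: total probability of halting in a state of H while reading w,
starting from the (unnormalised) state psi; after each step the state is measured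
with respect to accepting / rejecting / non-halting subspaces and only the
non-halting part (states N) continues.\<close>

fun haltp :: "nat \<Rightarrow> ('b \<Rightarrow> nat \<Rightarrow> nat \<Rightarrow> complex) \<Rightarrow> nat set \<Rightarrow> nat set \<Rightarrow> 'b list
              \<Rightarrow> (nat \<Rightarrow> complex) \<Rightarrow> real" where
  "haltp k U N H [] psi = 0"
| "haltp k U N H (s # w) psi =
     nsq k (proj H (mv k (U s) psi)) + haltp k U N H w (proj N (mv k (U s) psi))"

definition qfa_ok :: "nat \<Rightarrow> ('a tape \<Rightarrow> nat \<Rightarrow> nat \<Rightarrow> complex) \<Rightarrow> nat set \<Rightarrow> nat set \<Rightarrow> nat \<Rightarrow> bool" where
  "qfa_ok k U A R q0 \<longleftrightarrow> A \<subseteq> {..<k} \<and> R \<subseteq> {..<k} \<and> A \<inter> R = {} \<and>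
     q0 < k \<and> q0 \<notin> A \<and> q0 \<notin> R \<and> (\<forall>s. unitary_k k (U s))"

definition acc_prob :: "nat \<Rightarrow> ('a tape \<Rightarrow> nat \<Rightarrow> nat \<Rightarrow> complex) \<Rightarrow> nat set \<Rightarrow> nat set \<Rightarrow> nat
                        \<Rightarrow> 'a list \<Rightarrow> real" where
  "acc_prob k U A R q0 w =
     haltp k U ({..<k} - A - R) A (tape_of w) (\<lambda>i. if i = q0 then 1 else 0)"

definition rej_prob :: "nat \<Rightarrow> ('a tape \<Rightarrow> nat \<Rightarrow> nat \<Rightarrow> complex) \<Rightarrow> nat set \<Rightarrow> nat set \<Rightarrow> nat
                        \<Rightarrow> 'a list \<Rightarrow> real" where
  "rej_prob k U A R q0 w =
     haltp k U ({..<k} - A - R) R (tape_of w) (\<lambda>i. if i = q0 then 1 else 0)"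

definition QFA_n :: "'a list set set" where
  "QFA_n = {L. \<exists>(eps::real) g h k (U :: ('a \<times> nat) tape \<Rightarrow> nat \<Rightarrow> nat \<Rightarrow> complex) A R q0.
      0 \<le> eps \<and> eps < 1/2 \<and> advice_ok g h \<and> qfa_ok k U A R q0 \<and>
      (\<forall>x. (x \<in> L \<longrightarrow> acc_prob k U A R q0 (track x (h (length x))) \<ge> 1 - eps) \<and>
           (x \<notin> L \<longrightarrow> rej_prob k U A R q0 (track x (h (length x))) \<ge> 1 - eps))}"

end

theory Submission
  imports Defs "HOL-Analysis.L2_Norm"
begin

text \<open>The separating language is (aa+ab+ba)*. Suppose a 1qfa with advice recognises it with
  error eps < 1/2 and fix an input length n. The unhalted part of the state after a prefix has a
  squared norm (its surviving mass) that never grows, so appending greedily the block of length 2r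
  that loses least mass yields a prefix u after which every word of (aa+ab+ba)* of length 2r
  loses at most a tiny delta. Now encode bits as the blocks aa and ba. For two bit strings, at the
  first differing bit one continuation reads xa and the other yb; completing both by b a^2m puts
  the first word into the language and the second outside it, so the probabilities of later
  acceptance from the two states differ by about 1 - 2 eps. As the square root of such a
  probability is 1-Lipschitz in the state and little mass halts in between, the 2^r states after
  u encode bs are pairwise a constant apart. They lie in the unit ball of a space of fixed
  dimension, so a packing bound independent of r contradicts this for large r. Finally
  REG is contained in REG/n, so 1QFA/n and REG/n differ.\<close>

definition vnorm :: "nat \<Rightarrow> (nat \<Rightarrow> complex) \<Rightarrow> real" where
  "vnorm k v = sqrt (nsq k v)"

lemma nsq_nonneg: "0 \<le> nsq k v"
  unfolding nsq_def by (rule sum_nonneg) simp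

lemma vnorm_nonneg: "0 \<le> vnorm k v"
  unfolding vnorm_def by (simp add: nsq_nonneg)

lemma vnorm_power2: "(vnorm k v)\<^sup>2 = nsq k v"
  unfolding vnorm_def by (simp add: nsq_nonneg)

lemma vnorm_eq_L2_set: "vnorm k v = L2_set (\<lambda>i. cmod (v i)) {..<k}"
  unfolding vnorm_def nsq_def L2_set_def by simp

lemma nsq_cong: "(\<And>i. i < k \<Longrightarrow> v i = w i) \<Longrightarrow> nsq k v = nsq k w"
  unfolding nsq_def by (rule sum.cong) auto

lemma vnorm_cong: "(\<And>i. i < k \<Longrightarrow> v i = w i) \<Longrightarrow> vnorm k v = vnorm k w"
  unfolding vnorm_def using nsq_cong by metis

lemma vnorm_triangle: "vnorm k (\<lambda>i. v i + w i) \<le> vnorm k v + vnorm k w"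
proof -
  have "vnorm k (\<lambda>i. v i + w i) \<le> L2_set (\<lambda>i. cmod (v i) + cmod (w i)) {..<k}"
    unfolding vnorm_eq_L2_set by (rule L2_set_mono) (auto simp: norm_triangle_ineq)
  also have "\<dots> \<le> vnorm k v + vnorm k w"
    unfolding vnorm_eq_L2_set by (rule L2_set_triangle_ineq)
  finally show ?thesis .
qed

lemma vnorm_uminus: "vnorm k (- v) = vnorm k v"
  unfolding vnorm_def nsq_def by simp

lemma vnorm_minus_commute: "vnorm k (v - w) = vnorm k (w - v)"
  unfolding vnorm_def nsq_def by (simp add: norm_minus_commute)

lemma vnorm_diff_le: "vnorm k (v - w) \<le> vnorm k v + vnorm k w"
  using vnorm_triangle[of k v "- w"] by (simp add: vnorm_uminus fun_diff_def)

lemma vnorm_le_diff_add: "vnorm k v \<le> vnorm k (v - w) + vnorm k w"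
  using vnorm_triangle[of k "v - w" w] by (simp add: fun_diff_def)

lemma nsq_le_if_cmod_le:
  "(\<And>i. i < k \<Longrightarrow> cmod (v i) \<le> cmod (w i)) \<Longrightarrow> nsq k v \<le> nsq k w"
  unfolding nsq_def by (intro sum_mono power_mono) auto

lemma nsq_proj_Un:
  assumes "S \<inter> T = {}"
  shows "nsq k (proj S v) + nsq k (proj T v) = nsq k (proj (S \<union> T) v)"
  unfolding nsq_def sum.distrib[symmetric] using assms by (intro sum.cong) (auto simp: proj_def)

lemma nsq_proj_le: "nsq k (proj S v) \<le> nsq k v"
  by (rule nsq_le_if_cmod_le) (simp add: proj_def)

lemma nsq_proj_cover: "{..<k} \<subseteq> S \<Longrightarrow> nsq k (proj S v) = nsq k v"
  by (rule nsq_cong) (auto simp: proj_def)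

lemma mv_diff: "mv k U (v - w) = mv k U v - mv k U w"
  unfolding mv_def by (auto simp: algebra_simps sum_subtractf)

lemma proj_diff: "proj S (v - w) = proj S v - proj S w"
  unfolding proj_def by auto

lemma nsq_mv_unitary:
  assumes "unitary_k k U"
  shows "nsq k (mv k U v) = nsq k v"
proof -
  have "complex_of_real (nsq k (mv k U v)) = (\<Sum>i<k. mv k U v i * cnj (mv k U v i))"
    unfolding nsq_def by (simp only: of_real_sum complex_norm_square)
  also have "\<dots> = (\<Sum>i<k. (\<Sum>j<k. U i j * v j) * cnj (\<Sum>l<k. U i l * v l))"
    unfolding mv_def by (rule sum.cong) auto
  also have "\<dots> = (\<Sum>i<k. \<Sum>l<k. \<Sum>j<k. (U i j * v j) * (cnj (U i l) * cnj (v l)))"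
    by (simp add: sum_distrib_left sum_distrib_right)
  also have "\<dots> = (\<Sum>l<k. \<Sum>j<k. \<Sum>i<k. (U i j * v j) * (cnj (U i l) * cnj (v l)))"
    by (subst sum.swap) (rule sum.cong[OF refl], rule sum.swap)
  also have "\<dots> = (\<Sum>l<k. \<Sum>j<k. (v j * cnj (v l)) * (\<Sum>i<k. cnj (U i l) * U i j))"
    by (simp add: sum_distrib_left mult_ac)
  also have "\<dots> = (\<Sum>l<k. \<Sum>j<k. (v j * cnj (v l)) * (if l = j then 1 else 0))"
    using assms unfolding unitary_k_def by (intro sum.cong refl) auto
  also have "\<dots> = (\<Sum>l<k. v l * cnj (v l))"
    by (simp add: if_distrib cong: if_cong)
  also have "\<dots> = complex_of_real (nsq k v)"
    unfolding nsq_def by (simp only: of_real_sum complex_norm_square)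
  finally show ?thesis using of_real_eq_iff by blast
qed

lemma vnorm_mv_unitary: "unitary_k k U \<Longrightarrow> vnorm k (mv k U v) = vnorm k v"
  unfolding vnorm_def by (simp add: nsq_mv_unitary)

lemma sqrt_sum_squares_diff_le:
  fixes x1 x2 y1 y2 a b :: real
  assumes "\<bar>x1 - x2\<bar> \<le> a" "\<bar>y1 - y2\<bar> \<le> b"
  shows "\<bar>sqrt (x1\<^sup>2 + y1\<^sup>2) - sqrt (x2\<^sup>2 + y2\<^sup>2)\<bar> \<le> sqrt (a\<^sup>2 + b\<^sup>2)"
proof -
  have "\<bar>cmod (Complex x1 y1) - cmod (Complex x2 y2)\<bar> \<le> cmod (Complex x1 y1 - Complex x2 y2)"
    by (rule norm_triangle_ineq3)
  also have "\<dots> = sqrt ((x1 - x2)\<^sup>2 + (y1 - y2)\<^sup>2)" by (simp add: cmod_def)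
  also have "\<dots> \<le> sqrt (a\<^sup>2 + b\<^sup>2)"
    using assms by (intro real_sqrt_le_mono add_mono; metis power2_abs power_mono abs_ge_zero)
  finally show ?thesis by (simp add: cmod_def)
qed

lemma diff_le_twice_sqrt_diff:
  fixes p q :: real
  assumes "0 \<le> q" "q \<le> p" "p \<le> 1"
  shows "p - q \<le> 2 * (sqrt p - sqrt q)"
proof -
  have roots: "sqrt q \<le> sqrt p" "sqrt p \<le> 1" "sqrt q \<le> 1"
    using assms by auto
  have "(sqrt p - sqrt q) * (sqrt p + sqrt q) \<le> (sqrt p - sqrt q) * 2"
    by (rule mult_left_mono) (use roots in linarith)+
  moreover have "(sqrt p - sqrt q) * (sqrt p + sqrt q) = p - q"
    using assms by (simp add: algebra_simps)
  ultimately show ?thesis by simp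
qed

section \<open>Measure-many evolution\<close>

locale mm_qfa =
  fixes k :: nat and U :: "'s \<Rightarrow> nat \<Rightarrow> nat \<Rightarrow> complex" and A R :: "nat set"
  assumes A_R_disjoint: "A \<inter> R = {}" and unitary: "\<And>s. unitary_k k (U s)"
begin

abbreviation nonhalting :: "nat set" where
  "nonhalting \<equiv> {..<k} - A - R"

definition step :: "'s \<Rightarrow> (nat \<Rightarrow> complex) \<Rightarrow> (nat \<Rightarrow> complex)" where
  "step s v = proj nonhalting (mv k (U s) v)"

definition run :: "'s list \<Rightarrow> (nat \<Rightarrow> complex) \<Rightarrow> (nat \<Rightarrow> complex)" where
  "run w v = foldl (\<lambda>v s. step s v) v w"

lemma run_Nil [simp]: "run [] v = v"
  by (simp add: run_def)

lemma run_Cons [simp]: "run (s # w) v = run w (step s v)"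
  by (simp add: run_def)

lemma run_append: "run (w1 @ w2) v = run w2 (run w1 v)"
  by (simp add: run_def)

lemma haltp_Cons_step:
  "haltp k U nonhalting H (s # w) v = nsq k (proj H (mv k (U s) v)) + haltp k U nonhalting H w (step s v)"
  by (simp add: step_def)

lemma haltp_append:
  "haltp k U nonhalting H (w1 @ w2) v = haltp k U nonhalting H w1 v + haltp k U nonhalting H w2 (run w1 v)"
  by (induction w1 arbitrary: v) (simp_all add: step_def)

lemma haltp_nonneg: "0 \<le> haltp k U nonhalting H w v"
  by (induction w arbitrary: v) (auto simp: nsq_nonneg)

lemma nsq_split_halting: "nsq k x = nsq k (proj (A \<union> R) x) + nsq k (proj nonhalting x)"
proof -
  have "nsq k x = nsq k (proj ((A \<union> R) \<union> nonhalting) x)"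
    by (rule nsq_proj_cover[symmetric]) auto
  also have "\<dots> = nsq k (proj (A \<union> R) x) + nsq k (proj nonhalting x)"
    by (rule nsq_proj_Un[symmetric]) auto
  finally show ?thesis .
qed

lemma haltp_conservation:
  "haltp k U nonhalting A w v + haltp k U nonhalting R w v + nsq k (run w v) = nsq k v"
proof (induction w arbitrary: v)
  case Nil
  then show ?case by simp
next
  case (Cons s w)
  have "nsq k v = nsq k (mv k (U s) v)"
    using nsq_mv_unitary[OF unitary] by simp
  also have "\<dots> = nsq k (proj A (mv k (U s) v)) + nsq k (proj R (mv k (U s) v)) + nsq k (step s v)"
    unfolding step_def nsq_proj_Un[OF A_R_disjoint] by (rule nsq_split_halting)
  finally show ?case
    using Cons.IH[of "step s v"] by (simp add: step_def)
qed

lemma haltp_le_nsq: "haltp k U nonhalting A w v \<le> nsq k v" "haltp k U nonhalting R w v \<le> nsq k v"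
  and nsq_run_le: "nsq k (run w v) \<le> nsq k v"
  using haltp_conservation[of w v] haltp_nonneg[of A w v] haltp_nonneg[of R w v]
    nsq_nonneg[of k "run w v"]
  by linarith+

text \<open>The square root of a halting probability is 1-Lipschitz in the (unnormalised) state: the
  halting amplitudes read so far and the surviving state form a vector no longer than the input.\<close>

lemma sqrt_haltp_lipschitz:
  assumes H: "H \<inter> nonhalting = {}"
  shows "\<bar>sqrt (haltp k U nonhalting H w v) - sqrt (haltp k U nonhalting H w u)\<bar> \<le> vnorm k (v - u)"
proof (induction w arbitrary: v u)
  case Nil
  then show ?case by (simp add: vnorm_nonneg)
next
  case (Cons s w)
  let ?P = "mv k (U s) v" and ?Q = "mv k (U s) u"
  define x1 where "x1 = vnorm k (proj H ?P)"
  define x2 where "x2 = vnorm k (proj H ?Q)"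
  define y1 where "y1 = sqrt (haltp k U nonhalting H w (step s v))"
  define y2 where "y2 = sqrt (haltp k U nonhalting H w (step s u))"
  define a where "a = vnorm k (proj H (?P - ?Q))"
  define b where "b = vnorm k (step s v - step s u)"
  have v_split: "haltp k U nonhalting H (s # w) v = x1\<^sup>2 + y1\<^sup>2"
    unfolding haltp_Cons_step x1_def y1_def vnorm_power2 by (simp add: haltp_nonneg)
  have u_split: "haltp k U nonhalting H (s # w) u = x2\<^sup>2 + y2\<^sup>2"
    unfolding haltp_Cons_step x2_def y2_def vnorm_power2 by (simp add: haltp_nonneg)
  have x_close: "\<bar>x1 - x2\<bar> \<le> a"
    using vnorm_le_diff_add[of k "proj H ?P" "proj H ?Q"] vnorm_le_diff_add[of k "proj H ?Q" "proj H ?P"]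
      vnorm_minus_commute[of k "proj H ?P" "proj H ?Q"]
    unfolding x1_def x2_def a_def proj_diff by linarith
  have y_close: "\<bar>y1 - y2\<bar> \<le> b"
    unfolding y1_def y2_def b_def by (rule Cons.IH)
  have "a\<^sup>2 + b\<^sup>2 \<le> (vnorm k (v - u))\<^sup>2"
  proof -
    have "a\<^sup>2 + b\<^sup>2 = nsq k (proj (H \<union> nonhalting) (?P - ?Q))"
      unfolding a_def b_def vnorm_power2 step_def proj_diff[symmetric] nsq_proj_Un[OF H] ..
    also have "\<dots> \<le> nsq k (?P - ?Q)"
      by (rule nsq_proj_le)
    also have "\<dots> = (vnorm k (v - u))\<^sup>2"
      unfolding vnorm_power2 mv_diff[symmetric] by (rule nsq_mv_unitary[OF unitary])
    finally show ?thesis .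
  qed
  then have "sqrt (a\<^sup>2 + b\<^sup>2) \<le> vnorm k (v - u)"
    by (rule real_le_lsqrt[OF vnorm_nonneg])
  with sqrt_sum_squares_diff_le[OF x_close y_close] show ?case
    unfolding v_split u_split by linarith
qed

text \<open>One step can shrink the distance of two states by no more than the norms of the parts of
  them that halt in that step.\<close>

lemma vnorm_diff_le_step:
  "vnorm k (v - u) \<le> vnorm k (step s v - step s u)
     + sqrt (nsq k v - nsq k (step s v)) + sqrt (nsq k u - nsq k (step s u))"
proof -
  let ?P = "mv k (U s) v" and ?Q = "mv k (U s) u"
  have "nsq k x - nsq k (step s x) = nsq k (proj (A \<union> R) (mv k (U s) x))" for x
    using nsq_split_halting[of "mv k (U s) x"] nsq_mv_unitary[OF unitary, of s x]
    unfolding step_def by linarith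
  then have halted: "sqrt (nsq k v - nsq k (step s v)) = vnorm k (proj (A \<union> R) ?P)"
    "sqrt (nsq k u - nsq k (step s u)) = vnorm k (proj (A \<union> R) ?Q)"
    by (simp_all add: vnorm_def)
  have "vnorm k (v - u) = vnorm k (?P - ?Q)"
    by (simp add: mv_diff[symmetric] vnorm_mv_unitary[OF unitary])
  also have "\<dots> = vnorm k (\<lambda>i. (step s v - step s u) i + (proj (A \<union> R) ?P - proj (A \<union> R) ?Q) i)"
    by (rule vnorm_cong) (auto simp: step_def proj_def)
  also have "\<dots> \<le> vnorm k (step s v - step s u) + vnorm k (proj (A \<union> R) ?P - proj (A \<union> R) ?Q)"
    by (rule vnorm_triangle)
  also have "\<dots> \<le> vnorm k (step s v - step s u) + vnorm k (proj (A \<union> R) ?P) + vnorm k (proj (A \<union> R) ?Q)"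
    using vnorm_diff_le[of k "proj (A \<union> R) ?P" "proj (A \<union> R) ?Q"] by linarith
  finally show ?thesis
    unfolding halted .
qed

end

section \<open>Packing separated vectors in the unit ball\<close>

definition grid_cell :: "nat \<Rightarrow> nat \<Rightarrow> (nat \<Rightarrow> complex) \<Rightarrow> (int \<times> int) list" where
  "grid_cell k M v = map (\<lambda>i. (\<lfloor>Re (v i) * real M\<rfloor>, \<lfloor>Im (v i) * real M\<rfloor>)) [0..<k]"

lemma abs_diff_less_1_if_floor_eq: "\<lfloor>x::real\<rfloor> = \<lfloor>y\<rfloor> \<Longrightarrow> \<bar>x - y\<bar> < 1"
  using floor_correct[of x] floor_correct[of y] by (simp add: abs_if) linarith

lemma cmod_power2_le_nsq: "i < k \<Longrightarrow> (cmod (v i))\<^sup>2 \<le> nsq k v"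
  unfolding nsq_def by (rule member_le_sum) auto

lemma grid_cell_mem_lists:
  assumes "nsq k v \<le> 1"
  shows "grid_cell k M v \<in> {cs. set cs \<subseteq> {-int M..int M} \<times> {-int M..int M} \<and> length cs = k}"
proof -
  have floor_bound: "-int M \<le> \<lfloor>x * real M\<rfloor> \<and> \<lfloor>x * real M\<rfloor> \<le> int M" if "\<bar>x\<bar> \<le> 1" for x
  proof -
    have "- 1 * real M \<le> x * real M" "x * real M \<le> 1 * real M"
      using that by (intro mult_right_mono; simp add: abs_le_iff)+
    then show ?thesis by linarith
  qed
  have "\<bar>Re (v i)\<bar> \<le> 1 \<and> \<bar>Im (v i)\<bar> \<le> 1" if "i < k" for i
  proof -
    have "(cmod (v i))\<^sup>2 \<le> 1"
      using cmod_power2_le_nsq[OF that, of v] assms by linarith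
    then have "cmod (v i) \<le> 1" by (simp add: power_le_one_iff)
    then show ?thesis using abs_Re_le_cmod abs_Im_le_cmod order_trans by metis
  qed
  then show ?thesis unfolding grid_cell_def using floor_bound by auto
qed

lemma nsq_diff_less_if_grid_cell_eq:
  assumes "0 < k" and "grid_cell k M v = grid_cell k M w"
  shows "nsq k (v - w) * (real M)\<^sup>2 < real (2*k)"
proof -
  have "(cmod ((v - w) i))\<^sup>2 * (real M)\<^sup>2 < 2" if i: "i < k" for i
  proof -
    have "\<lfloor>Re (v i) * real M\<rfloor> = \<lfloor>Re (w i) * real M\<rfloor>" "\<lfloor>Im (v i) * real M\<rfloor> = \<lfloor>Im (w i) * real M\<rfloor>"
      using assms(2) i unfolding grid_cell_def by (auto simp: list_eq_iff_nth_eq)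
    then have "\<bar>Re ((v - w) i) * real M\<bar> < 1" "\<bar>Im ((v - w) i) * real M\<bar> < 1"
      using abs_diff_less_1_if_floor_eq by (auto simp: left_diff_distrib)
    then have "(Re ((v - w) i) * real M)\<^sup>2 < 1" "(Im ((v - w) i) * real M)\<^sup>2 < 1"
      by (simp_all add: abs_square_less_1)
    moreover have "(cmod ((v - w) i))\<^sup>2 * (real M)\<^sup>2 =
        (Re ((v - w) i) * real M)\<^sup>2 + (Im ((v - w) i) * real M)\<^sup>2"
      by (simp add: cmod_power2 power_mult_distrib distrib_right)
    ultimately show ?thesis by linarith
  qed
  then have "(\<Sum>i<k. (cmod ((v - w) i))\<^sup>2 * (real M)\<^sup>2) < (\<Sum>i<k. 2)"
    using assms(1) by (intro sum_strict_mono) auto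
  then show ?thesis
    unfolding nsq_def by (simp add: sum_distrib_right)
qed

text \<open>Vectors of norm at most 1 that are pairwise at distance at least d lie in distinct grid
  cells once the cell diameter sqrt(2k)/M is at most d.\<close>

lemma card_separated_le:
  fixes f :: "'i \<Rightarrow> nat \<Rightarrow> complex"
  assumes bounded: "\<And>i. i \<in> I \<Longrightarrow> nsq k (f i) \<le> 1"
    and separated: "\<And>i j. i \<in> I \<Longrightarrow> j \<in> I \<Longrightarrow> i \<noteq> j \<Longrightarrow> d \<le> vnorm k (f i - f j)"
    and "0 < d" and mesh: "real (2*k) \<le> (d * real M)\<^sup>2"
  shows "card I \<le> (2*M+1)^(2*k)"
proof -
  define S where "S = {-int M..int M} \<times> {-int M..int M}"
  define cells where "cells = {cs. set cs \<subseteq> S \<and> length cs = k}"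
  have "finite S" unfolding S_def by simp
  have "card S = (2*M+1)^2"
  proof -
    have "nat (2 * int M + 1) = 2*M+1" by linarith
    then show ?thesis unfolding S_def
      by (simp only: card_cartesian_product card_atLeastAtMost_int power2_eq_square) simp
  qed
  then have card_cells: "card cells = (2*M+1)^(2*k)"
    unfolding cells_def card_lists_length_eq[OF \<open>finite S\<close>] by (simp add: power_mult)
  have "inj_on (grid_cell k M \<circ> f) I"
  proof (rule inj_onI, rule ccontr)
    fix i j assume ij: "i \<in> I" "j \<in> I" "(grid_cell k M \<circ> f) i = (grid_cell k M \<circ> f) j" "i \<noteq> j"
    have d_le: "d \<le> vnorm k (f i - f j)" using separated ij by auto
    have "0 < k"
      using d_le \<open>0 < d\<close> by (cases k) (simp_all add: vnorm_def nsq_def)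
    have "(d * real M)\<^sup>2 \<le> nsq k (f i - f j) * (real M)\<^sup>2"
      using d_le \<open>0 < d\<close> by (simp add: power_mult_distrib mult_right_mono power_mono flip: vnorm_power2)
    with mesh nsq_diff_less_if_grid_cell_eq[OF \<open>0 < k\<close>, of M "f i" "f j"] ij(3)
    show False by simp
  qed
  moreover have "(grid_cell k M \<circ> f) ` I \<subseteq> cells"
    using grid_cell_mem_lists bounded unfolding cells_def S_def by auto
  moreover have "finite cells"
    unfolding cells_def using finite_lists_length_eq[OF \<open>finite S\<close>] by simp
  ultimately show ?thesis
    using card_cells card_image card_mono by metis
qed

text \<open>DFA for (aa+ab+ba)*: state 0 is initial and accepting, 1 and 2 remember a read a resp. b,
  and 3 is the dead state.\<close>

definition lstep :: "nat \<Rightarrow> ab \<Rightarrow> nat" where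
  "lstep q s = (if q = 0 then (if s = SymA then 1 else 2) else if q = 1 then 0
             else if q = 2 then (if s = SymA then 0 else 3) else 3)"

definition L_aa_ab_ba :: "ab list set" where
  "L_aa_ab_ba = {x. foldl lstep 0 x = 0}"

lemma L_aa_ab_ba_REG: "L_aa_ab_ba \<in> REG"
  unfolding REG_def L_aa_ab_ba_def dfa_ok_def
  by (rule CollectI, rule exI[of _ 4], rule exI[of _ lstep], rule exI[of _ 0], rule exI[of _ "{0}"])
     (auto simp: lstep_def)

lemma foldl_lstep_dead: "foldl lstep 3 z = 3"
  by (induction z) (auto simp: lstep_def)

lemma foldl_lstep_replicate_even: "foldl lstep 0 (replicate (2*m) SymA) = 0"
  by (induction m) (auto simp: lstep_def)

definition bit_sym :: "bool \<Rightarrow> ab" where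
  "bit_sym b = (if b then SymB else SymA)"

text \<open>Bits become the blocks aa and ba: encodings stay in (aa+ab+ba)*, and where two of them
  first differ one continues with a and the other with b.\<close>

definition encode :: "bool list \<Rightarrow> ab list" where
  "encode bs = concat (map (\<lambda>b. [bit_sym b, SymA]) bs)"

lemma encode_snoc: "encode (bs @ [b]) = encode bs @ [bit_sym b, SymA]"
  by (simp add: encode_def)

lemma length_encode: "length (encode bs) = 2 * length bs"
  by (induction bs) (auto simp: encode_def)

lemma foldl_lstep_encode: "foldl lstep 0 (encode bs) = 0"
  by (induction bs rule: rev_induct) (simp_all add: encode_def lstep_def bit_sym_def)

lemma zip_append_left: "zip (x @ y) zs = zip x zs @ zip y (drop (length x) zs)"
  by (induction x arbitrary: zs) (auto simp: zip_Cons1 split: list.split)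

section \<open>A 1qfa with advice recognising (aa+ab+ba)*\<close>

locale advised_qfa = mm_qfa k U A R for k and U :: "(ab \<times> nat) tape \<Rightarrow> nat \<Rightarrow> nat \<Rightarrow> complex" and A R +
  fixes eps :: real and h :: "nat \<Rightarrow> nat list" and q0 :: nat
  assumes eps_less: "eps < 1/2" and length_advice: "\<And>n. length (h n) = n" and q0: "q0 < k"
    and accepts: "\<And>x. x \<in> L_aa_ab_ba \<Longrightarrow> acc_prob k U A R q0 (track x (h (length x))) \<ge> 1 - eps"
    and rejects: "\<And>x. x \<notin> L_aa_ab_ba \<Longrightarrow> rej_prob k U A R q0 (track x (h (length x))) \<ge> 1 - eps"
begin

definition init :: "nat \<Rightarrow> complex" where
  "init = (\<lambda>i. if i = q0 then 1 else 0)"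

lemma nsq_init: "nsq k init = 1"
proof -
  have "nsq k init = (\<Sum>i<k. if i = q0 then 1 else 0)"
    unfolding nsq_def init_def by (rule sum.cong) auto
  also have "\<dots> = 1" using q0 by simp
  finally show ?thesis .
qed

text \<open>All words are read with the advice for the fixed input length n: y is read from position t
  on, and state n x is the unhalted part of the state after the end-marker and the prefix x.\<close>

definition adv_syms :: "nat \<Rightarrow> nat \<Rightarrow> ab list \<Rightarrow> (ab \<times> nat) tape list" where
  "adv_syms n t y = map Sym (zip y (drop t (h n)))"

definition state :: "nat \<Rightarrow> ab list \<Rightarrow> nat \<Rightarrow> complex" where
  "state n x = run (LEnd # adv_syms n 0 x) init"

definition mass :: "nat \<Rightarrow> ab list \<Rightarrow> real" where
  "mass n x = nsq k (state n x)"

definition acc_mass :: "nat \<Rightarrow> ab list \<Rightarrow> real" where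
  "acc_mass n x = haltp k U nonhalting A (LEnd # adv_syms n 0 x) init"

definition rej_mass :: "nat \<Rightarrow> ab list \<Rightarrow> real" where
  "rej_mass n x = haltp k U nonhalting R (LEnd # adv_syms n 0 x) init"

lemma adv_syms_append: "adv_syms n t (x @ y) = adv_syms n t x @ adv_syms n (t + length x) y"
  by (simp add: adv_syms_def zip_append_left add.commute)

lemma acc_rej_mass_sum: "acc_mass n x + rej_mass n x + mass n x = 1"
  using haltp_conservation[of "LEnd # adv_syms n 0 x" init] nsq_init
  unfolding acc_mass_def rej_mass_def mass_def state_def by simp

lemma state_append: "state n (x @ y) = run (adv_syms n (length x) y) (state n x)"
  unfolding state_def adv_syms_append by (simp add: run_append)

lemma acc_mass_append:
  "acc_mass n (x @ y) = acc_mass n x + haltp k U nonhalting A (adv_syms n (length x) y) (state n x)"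
  unfolding acc_mass_def state_def adv_syms_append
  using haltp_append[of A "LEnd # adv_syms n 0 x"] by simp

lemma rej_mass_append:
  "rej_mass n (x @ y) = rej_mass n x + haltp k U nonhalting R (adv_syms n (length x) y) (state n x)"
  unfolding rej_mass_def state_def adv_syms_append
  using haltp_append[of R "LEnd # adv_syms n 0 x"] by simp

lemma mass_append_le: "mass n (x @ y) \<le> mass n x"
  unfolding mass_def state_append by (rule nsq_run_le)

lemma mass_nonneg: "0 \<le> mass n x"
  unfolding mass_def by (rule nsq_nonneg)

lemma mass_le_1: "mass n x \<le> 1"
  using acc_rej_mass_sum[of n x] haltp_nonneg unfolding acc_mass_def rej_mass_def
  by (smt (verit))

lemma acc_mass_le_append: "acc_mass n x \<le> acc_mass n (x @ y)"
  unfolding acc_mass_append using haltp_nonneg by simp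

lemma acc_mass_increase_le: "acc_mass n (x @ y) - acc_mass n x \<le> mass n x - mass n (x @ y)"
  using acc_rej_mass_sum[of n x] acc_rej_mass_sum[of n "x @ y"]
    haltp_nonneg[of R "adv_syms n (length x) y" "state n x"]
  unfolding rej_mass_append by simp

lemma tape_of_track_split:
  "length (x @ y) = n \<Longrightarrow>
    tape_of (track (x @ y) (h (length (x @ y)))) = (LEnd # adv_syms n 0 x) @ (adv_syms n (length x) y @ [REnd])"
  unfolding tape_of_def track_def adv_syms_append[symmetric] by (simp add: adv_syms_def zip_append_left)

lemma acc_prob_split:
  "length (x @ y) = n \<Longrightarrow> acc_prob k U A R q0 (track (x @ y) (h (length (x @ y)))) =
     acc_mass n x + haltp k U nonhalting A (adv_syms n (length x) y @ [REnd]) (state n x)"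
  unfolding acc_prob_def acc_mass_def state_def tape_of_track_split init_def[symmetric]
  by (rule haltp_append)

lemma rej_prob_split:
  "length (x @ y) = n \<Longrightarrow> rej_prob k U A R q0 (track (x @ y) (h (length (x @ y)))) =
     rej_mass n x + haltp k U nonhalting R (adv_syms n (length x) y @ [REnd]) (state n x)"
  unfolding rej_prob_def rej_mass_def state_def tape_of_track_split init_def[symmetric]
  by (rule haltp_append)

lemma state_snoc:
  assumes "length x < n"
  shows "state n (x @ [c]) = step (Sym (c, h n ! length x)) (state n x)"
proof -
  have "drop (length x) (h n) = h n ! length x # drop (Suc (length x)) (h n)"
    using assms length_advice by (simp add: Cons_nth_drop_Suc)
  then show ?thesis unfolding state_append adv_syms_def by simp
qed

lemma vnorm_state_diff_le_snoc:
  assumes "length x = length y" "length x < n"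
  shows "vnorm k (state n x - state n y) \<le> vnorm k (state n (x @ [c]) - state n (y @ [c]))
          + sqrt (mass n x - mass n (x @ [c])) + sqrt (mass n y - mass n (y @ [c]))"
  using assms unfolding mass_def state_snoc[OF assms(2)] by (simp add: state_snoc vnorm_diff_le_step)

end

context advised_qfa
begin

text \<open>Completed by b a^(2m), the word xa is accepted and yb rejected; since yb has accepted at
  least about as much as xa, the remaining acceptance probabilities of the two states differ by
  about 1 - 2 eps.\<close>

lemma first_difference_separates:
  assumes len: "length x = length y" "length x + 2 \<le> n" "even n" "even (length x)"
    and x_in: "foldl lstep 0 x = 0" and y_in: "foldl lstep 0 y = 0"
    and acc_close: "acc_mass n (x @ [SymA]) \<le> acc_mass n (y @ [SymB]) + \<delta>"
    and \<delta>_le: "\<delta> \<le> (1 - 2*eps)/2"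
  shows "(1 - 2*eps)/4 \<le> vnorm k (state n (x @ [SymA]) - state n (y @ [SymB]))"
proof -
  define m where "m = (n - length x - 2) div 2"
  have m: "n - length x - 2 = 2*m"
    using len unfolding m_def by auto
  define z where "z = SymB # replicate (2*m) SymA"
  define T where "T = adv_syms n (Suc (length x)) z @ [REnd]"
  define qa where "qa = haltp k U nonhalting A T (state n (x @ [SymA]))"
  define qb where "qb = haltp k U nonhalting A T (state n (y @ [SymB]))"
  have x_len: "length ((x @ [SymA]) @ z) = n" and y_len: "length ((y @ [SymB]) @ z) = n"
    using m len unfolding z_def by simp_all
  have x_in_L: "(x @ [SymA]) @ z \<in> L_aa_ab_ba"
    using x_in foldl_lstep_replicate_even[of m] unfolding L_aa_ab_ba_def z_def by (simp add: lstep_def)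
  have qa_big: "1 - eps \<le> acc_mass n (x @ [SymA]) + qa"
    using accepts[OF x_in_L] acc_prob_split[OF x_len] unfolding qa_def T_def by simp
  have "foldl lstep 0 ((y @ [SymB]) @ z) = foldl lstep 3 (replicate (2*m) SymA)"
    using y_in unfolding z_def by (simp add: lstep_def)
  then have y_notin_L: "(y @ [SymB]) @ z \<notin> L_aa_ab_ba"
    unfolding L_aa_ab_ba_def using foldl_lstep_dead by simp
  have "1 - eps \<le> rej_mass n (y @ [SymB]) + haltp k U nonhalting R T (state n (y @ [SymB]))"
    using rejects[OF y_notin_L] rej_prob_split[OF y_len] len(1) unfolding T_def by simp
  moreover have "qb + haltp k U nonhalting R T (state n (y @ [SymB])) \<le> mass n (y @ [SymB])"
    using haltp_conservation[of T "state n (y @ [SymB])"] nsq_nonneg[of k]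
    unfolding qb_def mass_def by (smt (verit))
  ultimately have qb_small: "qb \<le> eps - acc_mass n (y @ [SymB])"
    using acc_rej_mass_sum[of n "y @ [SymB]"] by linarith
  have gap: "(1 - 2*eps)/2 \<le> qa - qb"
    using qa_big qb_small acc_close \<delta>_le by (smt (verit) field_sum_of_halves)
  have "qa \<le> 1"
    using haltp_le_nsq(1)[of T "state n (x @ [SymA])"] mass_le_1[of n "x @ [SymA]"]
    unfolding qa_def mass_def by linarith
  moreover have "0 \<le> qb"
    unfolding qb_def by (rule haltp_nonneg)
  ultimately have "qa - qb \<le> 2 * (sqrt qa - sqrt qb)"
    using gap eps_less by (intro diff_le_twice_sqrt_diff) auto
  also have "\<dots> \<le> 2 * vnorm k (state n (x @ [SymA]) - state n (y @ [SymB]))"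
    using sqrt_haltp_lipschitz[of A T "state n (x @ [SymA])" "state n (y @ [SymB])"]
    unfolding qa_def qb_def by (simp add: abs_le_iff Diff_Int_distrib)
  finally show ?thesis
    using gap by linarith
qed

definition stable :: "nat \<Rightarrow> ab list \<Rightarrow> nat \<Rightarrow> real \<Rightarrow> bool" where
  "stable n u r \<delta> \<longleftrightarrow> (\<forall>w. length w = 2*r \<and> foldl lstep 0 w = 0 \<longrightarrow> mass n u - mass n (u @ w) \<le> \<delta>)"

lemma stable_mass_drop_le:
  assumes "stable n u r \<delta>" "length cs < r"
    and "u @ encode cs @ [bit_sym c, SymA] = x @ y @ z" "x = u @ v"
  shows "mass n x - mass n (x @ y) \<le> \<delta>"
proof -
  define w where "w = encode cs @ [bit_sym c, SymA] @ replicate (2*(r - length cs - 1)) SymA"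
  have "length w = 2*r"
    using assms(2) unfolding w_def by (simp add: length_encode)
  moreover have "foldl lstep 0 w = 0"
    unfolding w_def using foldl_lstep_replicate_even[of "r - Suc (length cs)"]
    by (simp add: foldl_lstep_encode lstep_def bit_sym_def)
  ultimately have "mass n u - mass n (u @ w) \<le> \<delta>"
    using assms(1) unfolding stable_def by blast
  moreover have "mass n (u @ w) \<le> mass n (x @ y)"
  proof -
    have "u @ w = (x @ y) @ z @ replicate (2*(r - length cs - 1)) SymA"
      using assms(3) unfolding w_def by simp
    then show ?thesis by (simp only: mass_append_le)
  qed
  moreover have "mass n x \<le> mass n u"
    unfolding assms(4) by (rule mass_append_le)
  ultimately show ?thesis by linarith
qed

lemma stable_step_distance:
  assumes stable: "stable n u r \<delta>" and bound: "length u + 2*r \<le> n"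
    and cs: "length cs < r" "length cs' = length cs"
    and x: "u @ encode cs @ [bit_sym c, SymA] = x @ [s] @ z" "x = u @ v"
    and y: "u @ encode cs' @ [bit_sym c', SymA] = y @ [s] @ z'" "y = u @ v'"
    and "length x = length y"
  shows "vnorm k (state n x - state n y) \<le> vnorm k (state n (x @ [s]) - state n (y @ [s])) + 2 * sqrt \<delta>"
proof -
  have "length (x @ [s] @ z) \<le> n"
    using bound cs arg_cong[OF x(1), of length] by (simp add: length_encode)
  then have "length x < n" by simp
  moreover have "sqrt (mass n x - mass n (x @ [s])) \<le> sqrt \<delta>"
    using stable_mass_drop_le[OF stable cs(1) x] by simp
  moreover have "sqrt (mass n y - mass n (y @ [s])) \<le> sqrt \<delta>"
    using stable_mass_drop_le[OF stable _ y] cs by simp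
  ultimately show ?thesis
    using vnorm_state_diff_le_snoc[OF \<open>length x = length y\<close>, of n s] by linarith
qed

context
  fixes n u r \<delta>
  assumes stable: "stable n u r \<delta>" and u_in: "foldl lstep 0 u = 0" and "even (length u)"
    and "even n" and bound: "length u + 2*r \<le> n"
    and \<delta>_nonneg: "0 \<le> \<delta>" and \<delta>_le: "\<delta> \<le> (1 - 2*eps)/2"
begin

lemma different_bits_separate:
  assumes cs: "length cs < r" "length cs' = length cs"
  shows "(1 - 2*eps)/4 - 2 * sqrt \<delta> \<le>
    vnorm k (state n (u @ encode (cs @ [False])) - state n (u @ encode (cs' @ [True])))"
proof -
  define x where "x = u @ encode cs"
  define y where "y = u @ encode cs'"
  have "acc_mass n (x @ [SymA]) - acc_mass n u \<le> mass n u - mass n (u @ encode cs @ [SymA])"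
    using acc_mass_increase_le[of n u "encode cs @ [SymA]"] unfolding x_def by simp
  also have "\<dots> \<le> \<delta>"
    using stable_mass_drop_le[OF stable cs(1), of False u "encode cs @ [SymA]" "[SymA]" "[]"]
    by (simp add: bit_sym_def)
  finally have "acc_mass n (x @ [SymA]) \<le> acc_mass n (y @ [SymB]) + \<delta>"
    using acc_mass_le_append[of n u "encode cs' @ [SymB]"] unfolding y_def by simp
  then have "(1 - 2*eps)/4 \<le> vnorm k (state n (x @ [SymA]) - state n (y @ [SymB]))"
    using cs bound \<open>even n\<close> \<open>even (length u)\<close> u_in \<delta>_le
    by (intro first_difference_separates) (simp_all add: x_def y_def length_encode foldl_lstep_encode)
  also have "\<dots> \<le> vnorm k (state n (x @ [SymA, SymA]) - state n (y @ [SymB, SymA])) + 2 * sqrt \<delta>"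
    using stable_step_distance[OF stable bound cs, of False "x @ [SymA]" SymA "[]" "encode cs @ [SymA]"
        True "y @ [SymB]" "[]" "encode cs' @ [SymB]"] cs(2)
    by (simp add: x_def y_def bit_sym_def length_encode)
  finally have "(1 - 2*eps)/4 \<le>
      vnorm k (state n (x @ [SymA, SymA]) - state n (y @ [SymB, SymA])) + 2 * sqrt \<delta>" .
  moreover have "u @ encode (cs @ [False]) = x @ [SymA, SymA]" "u @ encode (cs' @ [True]) = y @ [SymB, SymA]"
    by (simp_all add: x_def y_def encode_snoc bit_sym_def)
  ultimately show ?thesis by (metis diff_le_eq)
qed

lemma encodings_separated:
  "j \<le> r \<Longrightarrow> length bs = j \<Longrightarrow> length bs' = j \<Longrightarrow> bs \<noteq> bs' \<Longrightarrow>
     (1 - 2*eps)/4 - 4 * real j * sqrt \<delta> \<le> vnorm k (state n (u @ encode bs) - state n (u @ encode bs'))"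
proof (induction j arbitrary: bs bs')
  case 0
  then show ?case by simp
next
  case (Suc j)
  obtain cs c where "bs = cs @ [c]"
    using Suc.prems(2) by (metis length_Suc_conv_rev)
  moreover obtain cs' c' where "bs' = cs' @ [c']"
    using Suc.prems(3) by (metis length_Suc_conv_rev)
  ultimately have bs: "bs = cs @ [c]" "bs' = cs' @ [c']" by blast+
  have cs: "length cs < r" "length cs' = length cs"
    using Suc.prems bs by auto
  have nonneg: "0 \<le> real j * sqrt \<delta>" "0 \<le> sqrt \<delta>"
    using \<delta>_nonneg by simp_all
  have Suc_j: "4 * real (Suc j) * sqrt \<delta> = 4 * real j * sqrt \<delta> + 4 * sqrt \<delta>"
    by (simp add: algebra_simps)
  show ?case
  proof (cases "c = c'")
    case True
    define x where "x = u @ encode cs"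
    define y where "y = u @ encode cs'"
    have "(1 - 2*eps)/4 - 4 * real j * sqrt \<delta> \<le> vnorm k (state n x - state n y)"
      unfolding x_def y_def by (rule Suc.IH) (use Suc.prems bs True cs in auto)
    also have "\<dots> \<le> vnorm k (state n (x @ [bit_sym c]) - state n (y @ [bit_sym c])) + 2 * sqrt \<delta>"
      using stable_step_distance[OF stable bound cs, of c x "bit_sym c" "[SymA]" "encode cs" c' y "[SymA]" "encode cs'"] cs(2)
      by (simp add: x_def y_def True length_encode)
    also have "\<dots> \<le> vnorm k (state n (x @ [bit_sym c, SymA]) - state n (y @ [bit_sym c, SymA]))
        + 2 * sqrt \<delta> + 2 * sqrt \<delta>"
      using stable_step_distance[OF stable bound cs, of c "x @ [bit_sym c]" SymA "[]" "encode cs @ [bit_sym c]"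
        c' "y @ [bit_sym c]" "[]" "encode cs' @ [bit_sym c]"] cs(2)
      by (simp add: x_def y_def True length_encode)
    finally have "(1 - 2*eps)/4 - 4 * real (Suc j) * sqrt \<delta> \<le>
        vnorm k (state n (x @ [bit_sym c, SymA]) - state n (y @ [bit_sym c, SymA]))"
      using Suc_j by linarith
    moreover have "u @ encode bs = x @ [bit_sym c, SymA]" "u @ encode bs' = y @ [bit_sym c, SymA]"
      by (simp_all add: bs x_def y_def True encode_snoc)
    ultimately show ?thesis by (simp only:)
  next
    case False
    have "(1 - 2*eps)/4 - 2 * sqrt \<delta> \<le> vnorm k (state n (u @ encode bs) - state n (u @ encode bs'))"
    proof (cases c)
      case True
      then have "bs = cs @ [True]" "bs' = cs' @ [False]"
        using bs False by simp_all
      moreover have "(1 - 2*eps)/4 - 2 * sqrt \<delta> \<le>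
          vnorm k (state n (u @ encode (cs' @ [False])) - state n (u @ encode (cs @ [True])))"
        by (rule different_bits_separate) (use cs in auto)
      ultimately show ?thesis
        by (simp only: vnorm_minus_commute[of k "state n (u @ encode (cs' @ [False]))"])
    next
      case False
      then have "bs = cs @ [False]" "bs' = cs' @ [True]"
        using bs \<open>c \<noteq> c'\<close> by simp_all
      then show ?thesis
        using different_bits_separate[OF cs] by (simp only:)
    qed
    then show ?thesis
      using nonneg Suc_j by linarith
  qed
qed

end

end

lemma exists_small_decrement:
  fixes f :: "nat \<Rightarrow> real"
  assumes "0 < W" "f 0 - f W \<le> 1"
  shows "\<exists>j<W. f j - f (Suc j) \<le> 1 / real W"
proof (rule ccontr)
  assume "\<not> ?thesis"
  then have "(\<Sum>j<W. 1 / real W) < (\<Sum>j<W. f j - f (Suc j))"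
    using assms(1) by (intro sum_strict_mono) auto
  also have "\<dots> = f 0 - f W"
    by (rule sum_lessThan_telescope')
  finally show False
    using assms by simp
qed

context advised_qfa
begin

definition blocks :: "nat \<Rightarrow> ab list set" where
  "blocks r = {w. length w = 2*r \<and> foldl lstep 0 w = 0}"

lemma finite_blocks: "finite (blocks r)"
proof (rule finite_subset)
  show "blocks r \<subseteq> {w. set w \<subseteq> {SymA, SymB} \<and> length w = 2*r}"
    unfolding blocks_def using ab.exhaust by auto
  show "finite {w. set w \<subseteq> {SymA, SymB} \<and> length w = 2*r}"
    by (rule finite_lists_length_eq) simp
qed

lemma blocks_nonempty: "blocks r \<noteq> {}"
proof -
  have "replicate (2*r) SymA \<in> blocks r"
    using foldl_lstep_replicate_even[of r] unfolding blocks_def by simp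
  then show ?thesis by blast
qed

definition greedy_prefix :: "nat \<Rightarrow> nat \<Rightarrow> nat \<Rightarrow> ab list" where
  "greedy_prefix n r j = ((\<lambda>u. u @ arg_min_on (\<lambda>w. mass n (u @ w)) (blocks r)) ^^ j) []"

lemma greedy_prefix_Suc:
  "greedy_prefix n r (Suc j) = greedy_prefix n r j @ arg_min_on (\<lambda>w. mass n (greedy_prefix n r j @ w)) (blocks r)"
  unfolding greedy_prefix_def by simp

lemma greedy_prefix_in_L: "length (greedy_prefix n r j) = 2*r*j \<and> foldl lstep 0 (greedy_prefix n r j) = 0"
proof (induction j)
  case 0
  then show ?case by (simp add: greedy_prefix_def)
next
  case (Suc j)
  then show ?case
    using arg_min_if_finite(1)[OF finite_blocks blocks_nonempty]
    unfolding greedy_prefix_Suc blocks_def by fastforce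
qed

text \<open>The mass is at most 1 and decreases along the greedy prefixes, so within W rounds some round
  loses at most 1/W; there even the best block loses that little, so every block does.\<close>

lemma exists_stable_prefix:
  assumes "0 < W" "1 / real W \<le> \<delta>"
  shows "\<exists>u. stable (2*r*W) u r \<delta> \<and> foldl lstep 0 u = 0 \<and> even (length u) \<and> length u + 2*r \<le> 2*r*W"
proof -
  define n where "n = 2*r*W"
  have "mass n (greedy_prefix n r 0) - mass n (greedy_prefix n r W) \<le> 1"
    using mass_le_1 mass_nonneg by (smt (verit))
  then obtain j where j: "j < W" "mass n (greedy_prefix n r j) - mass n (greedy_prefix n r (Suc j)) \<le> 1 / real W"
    using exists_small_decrement[OF \<open>0 < W\<close>, of "\<lambda>j. mass n (greedy_prefix n r j)"] by blast
  define u where "u = greedy_prefix n r j"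
  have "stable n u r \<delta>"
    unfolding stable_def
  proof (intro allI impI)
    fix w assume "length w = 2*r \<and> foldl lstep 0 w = 0"
    then have "mass n (greedy_prefix n r (Suc j)) \<le> mass n (u @ w)"
      unfolding greedy_prefix_Suc u_def
      by (intro arg_min_least[OF finite_blocks blocks_nonempty]) (simp add: blocks_def)
    then show "mass n u - mass n (u @ w) \<le> \<delta>"
      using j assms(2) unfolding u_def by linarith
  qed
  moreover have "length u + 2*r \<le> n"
  proof -
    have "2*r*(Suc j) \<le> 2*r*W"
      using j(1) by (intro mult_le_mono2) simp
    then show ?thesis
      using greedy_prefix_in_L[of n r j] unfolding n_def u_def by simp
  qed
  ultimately show ?thesis
    using greedy_prefix_in_L[of n r j] unfolding n_def u_def by auto
qed

theorem inconsistent: False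
proof -
  define d where "d = (1 - 2*eps)/8"
  have "0 < d" using eps_less unfolding d_def by simp
  define M where "M = nat \<lceil>sqrt (real (2*k)) / d\<rceil>"
  have "sqrt (real (2*k)) / d \<le> real M"
    unfolding M_def by (rule real_nat_ceiling_ge)
  then have "sqrt (real (2*k)) \<le> d * real M"
    using \<open>0 < d\<close> by (simp add: divide_le_eq mult.commute)
  then have mesh: "real (2*k) \<le> (d * real M)\<^sup>2"
    by (metis of_nat_0_le_iff power_mono real_sqrt_ge_zero real_sqrt_pow2)
  define r where "r = (2*M+1)^(2*k)"
  have "0 < r" unfolding r_def by simp
  define \<delta> where "\<delta> = min ((1 - 2*eps)/2) ((d / (4 * real r))\<^sup>2)"
  have "0 < \<delta>" unfolding \<delta>_def using eps_less \<open>0 < d\<close> \<open>0 < r\<close> by simp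
  have \<delta>_le: "\<delta> \<le> (1 - 2*eps)/2" unfolding \<delta>_def by (rule min.cobounded1)
  have "sqrt \<delta> \<le> d / (4 * real r)"
    using \<open>0 < d\<close> \<open>0 < r\<close> unfolding \<delta>_def by (simp add: real_le_lsqrt real_sqrt_le_iff)
  then have loss: "4 * real r * sqrt \<delta> \<le> d"
    using \<open>0 < r\<close> by (simp add: field_simps)
  define W where "W = nat \<lceil>1 / \<delta>\<rceil>"
  have "1 / \<delta> \<le> real W"
    unfolding W_def by (rule real_nat_ceiling_ge)
  then have "0 < W" "1 \<le> \<delta> * real W"
    using \<open>0 < \<delta>\<close> by (auto simp: divide_le_eq mult.commute dest: order.strict_trans1[rotated])
  then have "0 < W" "1 / real W \<le> \<delta>"
    by (simp_all add: divide_le_eq mult.commute)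
  then obtain u where u: "stable (2*r*W) u r \<delta>" "foldl lstep 0 u = 0" "even (length u)"
    "length u + 2*r \<le> 2*r*W"
    using exists_stable_prefix by blast
  let ?state = "\<lambda>bs. state (2*r*W) (u @ encode bs)"
  have "card {bs :: bool list. set bs \<subseteq> UNIV \<and> length bs = r} \<le> (2*M+1)^(2*k)"
  proof (rule card_separated_le[OF _ _ \<open>0 < d\<close> mesh])
    show "nsq k (?state bs) \<le> 1" for bs
      using mass_le_1 unfolding mass_def by simp
    show "d \<le> vnorm k (?state bs - ?state bs')"
      if "bs \<in> {bs. set bs \<subseteq> UNIV \<and> length bs = r}" "bs' \<in> {bs. set bs \<subseteq> UNIV \<and> length bs = r}"
        "bs \<noteq> bs'" for bs bs'
    proof -
      have "(1 - 2*eps)/4 - 4 * real r * sqrt \<delta> \<le> vnorm k (?state bs - ?state bs')"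
        using \<open>0 < \<delta>\<close> that
        by (intro encodings_separated[OF u(1-3) _ u(4) _ \<delta>_le]) simp_all
      then show ?thesis
        using loss unfolding d_def by linarith
    qed
  qed
  then show False
    unfolding card_lists_length_eq[OF finite_UNIV] r_def[symmetric] using less_exp[of r] by simp
qed

end

lemma L_aa_ab_ba_not_QFA_n: "L_aa_ab_ba \<notin> QFA_n"
proof
  assume "L_aa_ab_ba \<in> QFA_n"
  then obtain eps g h k A R q0 and U :: "(ab \<times> nat) tape \<Rightarrow> nat \<Rightarrow> nat \<Rightarrow> complex" where
    "0 \<le> eps" "eps < 1/2" "advice_ok g h" "qfa_ok k U A R q0"
    "\<forall>x. (x \<in> L_aa_ab_ba \<longrightarrow> acc_prob k U A R q0 (track x (h (length x))) \<ge> 1 - eps) \<and>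
         (x \<notin> L_aa_ab_ba \<longrightarrow> rej_prob k U A R q0 (track x (h (length x))) \<ge> 1 - eps)"
    unfolding QFA_n_def by blast
  then interpret advised_qfa k U A R eps h q0
    unfolding qfa_ok_def advice_ok_def by unfold_locales auto
  show False by (rule inconsistent)
qed

lemma REG_subset_REG_n: "(REG :: 'a list set set) \<subseteq> REG_n"
proof
  fix L :: "'a list set"
  assume "L \<in> REG"
  then obtain k delta q0 F where dfa: "dfa_ok k delta q0" "L = {x. foldl delta q0 x \<in> F}"
    unfolding REG_def by blast
  define delta' where "delta' = (\<lambda>q (c :: 'a \<times> nat). delta q (fst c))"
  have run: "foldl delta' q (track x (replicate (length x) 0)) = foldl delta q x" for q x
    unfolding track_def by (induction x arbitrary: q) (auto simp: delta'_def)
  have "advice_ok 1 (\<lambda>n. replicate n 0) \<and> dfa_ok k delta' q0 \<and>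
      (\<forall>x. x \<in> L \<longleftrightarrow> foldl delta' q0 (track x (replicate (length x) 0)) \<in> F)"
    using dfa unfolding run unfolding advice_ok_def dfa_ok_def delta'_def by auto
  then show "L \<in> REG_n"
    unfolding REG_n_def by blast
qed

theorem corollary3p5:
  shows "\<not> ((REG :: ab list set set) \<subseteq> QFA_n) \<and> (QFA_n :: ab list set set) \<noteq> REG_n"
proof
  show not_subset: "\<not> ((REG :: ab list set set) \<subseteq> QFA_n)"
    using L_aa_ab_ba_REG L_aa_ab_ba_not_QFA_n by blast
  show "(QFA_n :: ab list set set) \<noteq> REG_n"
    using not_subset REG_subset_REG_n[where 'a = ab] by auto
qed

end
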